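(* Let $A$ be a ring, $M$ a left $A$-module, $W$ a multiplicative subset of $A$, $V$ a multiplicative submonoid of the center $Z(A)$ of $A$, and $S$ a subset of $M$. Then $G^{W,V}_M(S)$ is the smallest $V$-regular $W$-factroid of $M$ containing $S$.
   Context: Rings are unital, not necessarily commutative. A $W$-factroid of $M$ is an additive subgroup $F$ of $M$ such that for all $x\in M$ and $w\in W$, $wx\in F$ implies $x\in F$; for $X\subseteq M$, $[X]^W_M$ is the smallest $W$-factroid of $M$ containing $X$. For $h\in A$ and $X\subseteq M$, $hX=\{hx\mid x\in X\}$. For $T\subseteq A$, a $W$-factroid $F$ of $M$ is $T$-regular if for all $h\in T$ and $x\in M$, $hx\in[hF]^W_M$ implies $x\in F$. $G^{W,V}_M(S):=\{x\in M\mid hx\in[hS]^W_M \text{ for some } h\in V\}$. *)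

theory Defs
  imports Main
begin

definition left_module :: "('a::ring_1 \<Rightarrow> 'm::ab_group_add \<Rightarrow> 'm) \<Rightarrow> bool" where
  "left_module sm \<longleftrightarrow>
     (\<forall>a x y. sm a (x + y) = sm a x + sm a y) \<and>
     (\<forall>a b x. sm (a + b) x = sm a x + sm b x) \<and>
     (\<forall>a b x. sm (a * b) x = sm a (sm b x)) \<and>
     (\<forall>x. sm 1 x = x)"

definition multiplicative_subset :: "'a::ring_1 set \<Rightarrow> bool" where
  "multiplicative_subset W \<longleftrightarrow> 1 \<in> W \<and> (\<forall>a\<in>W. \<forall>b\<in>W. a * b \<in> W)"

definition ring_center :: "'a::ring_1 set" where
  "ring_center = {z. \<forall>a. z * a = a * z}"

definition additive_subgroup :: "'m::ab_group_add set \<Rightarrow> bool" where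
  "additive_subgroup F \<longleftrightarrow> 0 \<in> F \<and> (\<forall>x\<in>F. \<forall>y\<in>F. x + y \<in> F) \<and> (\<forall>x\<in>F. - x \<in> F)"

definition factroid ::
  "('a::ring_1 \<Rightarrow> 'm::ab_group_add \<Rightarrow> 'm) \<Rightarrow> 'a set \<Rightarrow> 'm set \<Rightarrow> bool" where
  "factroid sm W F \<longleftrightarrow> additive_subgroup F \<and> (\<forall>x w. w \<in> W \<longrightarrow> sm w x \<in> F \<longrightarrow> x \<in> F)"

definition factroid_hull ::
  "('a::ring_1 \<Rightarrow> 'm::ab_group_add \<Rightarrow> 'm) \<Rightarrow> 'a set \<Rightarrow> 'm set \<Rightarrow> 'm set" where
  "factroid_hull sm W X = \<Inter>{F. factroid sm W F \<and> X \<subseteq> F}"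

definition regular_factroid ::
  "('a::ring_1 \<Rightarrow> 'm::ab_group_add \<Rightarrow> 'm) \<Rightarrow> 'a set \<Rightarrow> 'a set \<Rightarrow> 'm set \<Rightarrow> bool" where
  "regular_factroid sm W T F \<longleftrightarrow> factroid sm W F \<and>
     (\<forall>h\<in>T. \<forall>x. sm h x \<in> factroid_hull sm W (sm h ` F) \<longrightarrow> x \<in> F)"

definition G_set ::
  "('a::ring_1 \<Rightarrow> 'm::ab_group_add \<Rightarrow> 'm) \<Rightarrow> 'a set \<Rightarrow> 'a set \<Rightarrow> 'm set \<Rightarrow> 'm set" where
  "G_set sm W V S = {x. \<exists>h\<in>V. sm h x \<in> factroid_hull sm W (sm h ` S)}"

end

theory Submission
  imports Defs
begin

text \<open>Scaling by a central element h commutes with every w \<in> W, so the preimage of a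
  W-factroid under x \<mapsto> hx is again a W-factroid; hence hx \<in> [hX] whenever x \<in> [X].
  This lets a witness h of x \<in> G(S) be replaced by any multiple kh with k \<in> V: two
  elements of G(S) share the witness hk, which makes G(S) an additive group, and
  G(G(S)) \<subseteq> G(S) follows by composing witnesses.  Regularity of F with respect to V
  says exactly G(F) \<subseteq> F, so G(S) is regular, and it lies in every regular F \<supseteq> S
  because G is monotone.\<close>

lemma left_module_add: "left_module sm \<Longrightarrow> sm a (x + y) = sm a x + sm a y"
  unfolding left_module_def by blast

lemma left_module_mult: "left_module sm \<Longrightarrow> sm (a * b) x = sm a (sm b x)"
  unfolding left_module_def by blast

lemma left_module_one: "left_module sm \<Longrightarrow> sm 1 x = x"
  unfolding left_module_def by blast

lemma image_left_module_mult: "left_module sm \<Longrightarrow> sm (a * b) ` X = sm a ` sm b ` X"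
  by (auto simp: left_module_mult image_image)

lemma left_module_zero: "left_module sm \<Longrightarrow> sm a 0 = 0"
  using left_module_add[of sm a 0 0] by simp

lemma left_module_minus: "left_module sm \<Longrightarrow> sm a (- x) = - sm a x"
  using left_module_add[of sm a x "- x"] left_module_zero[of sm a]
  by (simp add: add_eq_0_iff)

lemma left_module_central_commute:
  assumes "left_module sm" and "h \<in> ring_center"
  shows "sm h (sm w x) = sm w (sm h x)"
proof -
  have "h * w = w * h" using \<open>h \<in> ring_center\<close> unfolding ring_center_def by simp
  then show ?thesis using left_module_mult[OF \<open>left_module sm\<close>] by metis
qed

lemma factroid_zero: "factroid sm W F \<Longrightarrow> 0 \<in> F"
  unfolding factroid_def additive_subgroup_def by blast

lemma factroid_add: "factroid sm W F \<Longrightarrow> x \<in> F \<Longrightarrow> y \<in> F \<Longrightarrow> x + y \<in> F"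
  unfolding factroid_def additive_subgroup_def by blast

lemma factroid_minus: "factroid sm W F \<Longrightarrow> x \<in> F \<Longrightarrow> - x \<in> F"
  unfolding factroid_def additive_subgroup_def by blast

lemma factroid_cancel: "factroid sm W F \<Longrightarrow> w \<in> W \<Longrightarrow> sm w x \<in> F \<Longrightarrow> x \<in> F"
  unfolding factroid_def by blast

lemma factroid_factroid_hull: "factroid sm W (factroid_hull sm W X)"
  unfolding factroid_hull_def factroid_def additive_subgroup_def by blast

lemma factroid_hull_subset: "X \<subseteq> factroid_hull sm W X"
  unfolding factroid_hull_def by blast

lemma factroid_hull_minimal: "factroid sm W F \<Longrightarrow> X \<subseteq> F \<Longrightarrow> factroid_hull sm W X \<subseteq> F"
  unfolding factroid_hull_def by blast

lemma factroid_hull_mono: "X \<subseteq> Y \<Longrightarrow> factroid_hull sm W X \<subseteq> factroid_hull sm W Y"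
  unfolding factroid_hull_def by blast

lemma factroid_vimage_central:
  assumes lm: "left_module sm" and k: "k \<in> ring_center" and F: "factroid sm W F"
  shows "factroid sm W {x. sm k x \<in> F}"
  unfolding factroid_def additive_subgroup_def
proof (intro conjI ballI allI impI)
  show "0 \<in> {x. sm k x \<in> F}"
    using factroid_zero[OF F] by (simp add: left_module_zero[OF lm])
  show "x + y \<in> {x. sm k x \<in> F}" if "x \<in> {x. sm k x \<in> F}" "y \<in> {x. sm k x \<in> F}" for x y
    using that factroid_add[OF F] by (simp add: left_module_add[OF lm])
  show "- x \<in> {x. sm k x \<in> F}" if "x \<in> {x. sm k x \<in> F}" for x
    using that factroid_minus[OF F] by (simp add: left_module_minus[OF lm])
  show "x \<in> {x. sm k x \<in> F}" if "w \<in> W" "sm w x \<in> {x. sm k x \<in> F}" for x w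
    using that factroid_cancel[OF F] by (simp add: left_module_central_commute[OF lm k])
qed

lemma image_factroid_hull_central:
  assumes "left_module sm" and "k \<in> ring_center"
  shows "sm k ` factroid_hull sm W X \<subseteq> factroid_hull sm W (sm k ` X)"
proof -
  have "factroid_hull sm W X \<subseteq> {x. sm k x \<in> factroid_hull sm W (sm k ` X)}"
    using factroid_hull_subset[of "sm k ` X" sm W]
    by (intro factroid_hull_minimal factroid_vimage_central[OF assms] factroid_factroid_hull)
      auto
  then show ?thesis by blast
qed

lemma factroid_hull_image_mult:
  assumes "left_module sm" and "k \<in> ring_center"
    and "sm h x \<in> factroid_hull sm W (sm h ` X)"
  shows "sm (k * h) x \<in> factroid_hull sm W (sm (k * h) ` X)"
proof -
  have "sm k (sm h x) \<in> factroid_hull sm W (sm k ` sm h ` X)"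
    using image_factroid_hull_central[OF assms(1,2)] assms(3) by blast
  then show ?thesis
    unfolding image_left_module_mult[OF assms(1)] left_module_mult[OF assms(1)] .
qed

lemma G_set_mono:
  assumes "S \<subseteq> T"
  shows "G_set sm W V S \<subseteq> G_set sm W V T"
  using factroid_hull_mono[OF image_mono[OF assms]] unfolding G_set_def by blast

lemma regular_factroid_iff_G_set_subset:
  "regular_factroid sm W T F \<longleftrightarrow> factroid sm W F \<and> G_set sm W T F \<subseteq> F"
  unfolding regular_factroid_def G_set_def by auto

lemma G_set_subset_regular_factroid:
  assumes "regular_factroid sm W T F" and "S \<subseteq> F"
  shows "G_set sm W T S \<subseteq> F"
proof -
  have "G_set sm W T F \<subseteq> F"
    using assms(1) by (simp add: regular_factroid_iff_G_set_subset)
  with G_set_mono[OF assms(2)] show ?thesis by (rule order_trans)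
qed

locale central_scalars =
  fixes sm :: "'a::ring_1 \<Rightarrow> 'm::ab_group_add \<Rightarrow> 'm" and W V :: "'a set"
  assumes left_module: "left_module sm"
    and central: "V \<subseteq> ring_center"
    and one_mem: "1 \<in> V"
    and mult_mem: "a \<in> V \<Longrightarrow> b \<in> V \<Longrightarrow> a * b \<in> V"
begin

lemma G_setI: "h \<in> V \<Longrightarrow> sm h x \<in> factroid_hull sm W (sm h ` S) \<Longrightarrow> x \<in> G_set sm W V S"
  unfolding G_set_def by blast

lemma G_setE:
  assumes "x \<in> G_set sm W V S"
  obtains h where "h \<in> V" "h \<in> ring_center" "sm h x \<in> factroid_hull sm W (sm h ` S)"
  using assms central unfolding G_set_def by blast

lemma subset_G_set: "S \<subseteq> G_set sm W V S"
  using G_setI[OF one_mem, of _ S] factroid_hull_subset[of S sm W]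
  by (auto simp: left_module_one[OF left_module])

lemma factroid_G_set: "factroid sm W (G_set sm W V S)"
  unfolding factroid_def additive_subgroup_def
proof (intro conjI ballI allI impI)
  show "0 \<in> G_set sm W V S"
    using factroid_zero[OF factroid_factroid_hull]
    by (intro G_setI[OF one_mem]) (simp add: left_module_zero[OF left_module])
next
  fix x y assume "x \<in> G_set sm W V S" "y \<in> G_set sm W V S"
  then obtain h k where h: "h \<in> V" "h \<in> ring_center" "sm h x \<in> factroid_hull sm W (sm h ` S)"
    and k: "k \<in> V" "k \<in> ring_center" "sm k y \<in> factroid_hull sm W (sm k ` S)"
    by (elim G_setE)
  have "k * h = h * k" using h(2) unfolding ring_center_def by simp
  then have "sm (h * k) x \<in> factroid_hull sm W (sm (h * k) ` S)"
    and "sm (h * k) y \<in> factroid_hull sm W (sm (h * k) ` S)"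
    using factroid_hull_image_mult[OF left_module k(2) h(3)]
      factroid_hull_image_mult[OF left_module h(2) k(3)] by simp_all
  then show "x + y \<in> G_set sm W V S"
    using factroid_add[OF factroid_factroid_hull] mult_mem[OF h(1) k(1)]
    by (intro G_setI) (auto simp: left_module_add[OF left_module])
next
  fix x assume "x \<in> G_set sm W V S"
  then obtain h where "h \<in> V" "sm h x \<in> factroid_hull sm W (sm h ` S)" by (auto elim: G_setE)
  then show "- x \<in> G_set sm W V S"
    using factroid_minus[OF factroid_factroid_hull]
    by (intro G_setI) (auto simp: left_module_minus[OF left_module])
next
  fix x w assume "w \<in> W" "sm w x \<in> G_set sm W V S"
  then obtain h where h: "h \<in> V" "h \<in> ring_center"
    and "sm h (sm w x) \<in> factroid_hull sm W (sm h ` S)"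
    by (elim G_setE)
  then have "sm w (sm h x) \<in> factroid_hull sm W (sm h ` S)"
    by (simp only: left_module_central_commute[OF left_module h(2)])
  then show "x \<in> G_set sm W V S"
    using factroid_cancel[OF factroid_factroid_hull \<open>w \<in> W\<close>] G_setI[OF h(1)] by blast
qed

lemma image_G_set_subset:
  assumes "h \<in> V"
  shows "sm h ` G_set sm W V S \<subseteq> G_set sm W V (sm h ` S)"
proof
  fix z assume "z \<in> sm h ` G_set sm W V S"
  then obtain x k where z: "z = sm h x" and k: "k \<in> V" "k \<in> ring_center"
    and kx: "sm k x \<in> factroid_hull sm W (sm k ` S)"
    by (auto elim: G_setE)
  have "h \<in> ring_center" using assms central by blast
  have "h * k = k * h" using k(2) unfolding ring_center_def by simp
  then have "sm (k * h) x \<in> factroid_hull sm W (sm (k * h) ` S)"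
    using factroid_hull_image_mult[OF left_module \<open>h \<in> ring_center\<close> kx] by simp
  then have "sm k z \<in> factroid_hull sm W (sm k ` sm h ` S)"
    unfolding z image_left_module_mult[OF left_module] left_module_mult[OF left_module] .
  then show "z \<in> G_set sm W V (sm h ` S)" by (rule G_setI[OF k(1)])
qed

lemma G_set_image_cancel:
  assumes "h \<in> V" and "sm h x \<in> G_set sm W V (sm h ` S)"
  shows "x \<in> G_set sm W V S"
proof -
  obtain k where k: "k \<in> V"
    and hx: "sm k (sm h x) \<in> factroid_hull sm W (sm k ` sm h ` S)"
    using assms(2) by (elim G_setE)
  have "sm (k * h) x \<in> factroid_hull sm W (sm (k * h) ` S)"
    using hx unfolding image_left_module_mult[OF left_module] left_module_mult[OF left_module] .
  then show ?thesis by (rule G_setI[OF mult_mem[OF k assms(1)]])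
qed

lemma G_set_G_set_subset: "G_set sm W V (G_set sm W V S) \<subseteq> G_set sm W V S"
proof
  fix x assume "x \<in> G_set sm W V (G_set sm W V S)"
  then obtain h where h: "h \<in> V"
    and "sm h x \<in> factroid_hull sm W (sm h ` G_set sm W V S)"
    by (auto elim: G_setE)
  moreover have "factroid_hull sm W (sm h ` G_set sm W V S) \<subseteq> G_set sm W V (sm h ` S)"
    using factroid_hull_minimal[OF factroid_G_set image_G_set_subset[OF h]] .
  ultimately show "x \<in> G_set sm W V S" using G_set_image_cancel by blast
qed

lemma regular_factroid_G_set: "regular_factroid sm W V (G_set sm W V S)"
  using factroid_G_set G_set_G_set_subset regular_factroid_iff_G_set_subset by blast

end

theorem proposition6p13:
  fixes sm :: "'a::ring_1 \<Rightarrow> 'm::ab_group_add \<Rightarrow> 'm"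
    and W V :: "'a set" and S :: "'m set"
  assumes "left_module sm"
    and "multiplicative_subset W"
    and "V \<subseteq> ring_center" and "1 \<in> V" and "\<forall>a\<in>V. \<forall>b\<in>V. a * b \<in> V"
  shows "regular_factroid sm W V (G_set sm W V S) \<and> S \<subseteq> G_set sm W V S \<and>
         (\<forall>F. regular_factroid sm W V F \<and> S \<subseteq> F \<longrightarrow> G_set sm W V S \<subseteq> F)"
proof -
  interpret central_scalars sm W V
    using assms(1,3-5) by unfold_locales blast+
  show ?thesis
    using regular_factroid_G_set subset_G_set G_set_subset_regular_factroid by blast
qed

end
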